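(* Let $n$ be a positive integer and $k$ an even integer with $n/2+1\le k\le n-1$. If $G$ is a graph with $H_{n,k}\subseteq G\subseteq H'_{n,k}$, then $G$ is a core.
   Context: $H_{n,k}$ is the graph on the even-weight elements of $\mathbb{Z}_2^n$ with $x\sim y$ iff the Hamming distance $d(x,y)=k$; $H'_{n,k}$ is the graph on the same vertex set with $x\sim y$ iff $d(x,y)\ge k$; $G$ has this vertex set and edge set between those of $H_{n,k}$ and $H'_{n,k}$. A graph is a core if every homomorphism (adjacency-preserving map) from it to itself is an automorphism. *)

theory Defs
  imports Complex_Main
begin

text \<open>Elements of Z_2^n are represented by their supports, i.e. subsets of {0..<n};
  the Hamming distance is the size of the symmetric difference.\<close>

definition even_cube :: "nat \<Rightarrow> nat set set" where
  "even_cube n = {x. x \<subseteq> {..<n} \<and> even (card x)}"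

definition hamming :: "nat set \<Rightarrow> nat set \<Rightarrow> nat" where
  "hamming x y = card ((x - y) \<union> (y - x))"

definition is_graph :: "'a set \<Rightarrow> ('a \<Rightarrow> 'a \<Rightarrow> bool) \<Rightarrow> bool" where
  "is_graph V E \<longleftrightarrow> (\<forall>x\<in>V. \<forall>y\<in>V. E x y \<longrightarrow> E y x) \<and> (\<forall>x\<in>V. \<not> E x x)"

definition graph_hom :: "'a set \<Rightarrow> ('a \<Rightarrow> 'a \<Rightarrow> bool) \<Rightarrow> 'b set \<Rightarrow> ('b \<Rightarrow> 'b \<Rightarrow> bool) \<Rightarrow> ('a \<Rightarrow> 'b) \<Rightarrow> bool" where
  "graph_hom V E W F f \<longleftrightarrow> f ` V \<subseteq> W \<and> (\<forall>x\<in>V. \<forall>y\<in>V. E x y \<longrightarrow> F (f x) (f y))"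

definition graph_aut :: "'a set \<Rightarrow> ('a \<Rightarrow> 'a \<Rightarrow> bool) \<Rightarrow> ('a \<Rightarrow> 'a) \<Rightarrow> bool" where
  "graph_aut V E f \<longleftrightarrow> bij_betw f V V \<and> (\<forall>x\<in>V. \<forall>y\<in>V. E x y \<longleftrightarrow> E (f x) (f y))"

definition is_core :: "'a set \<Rightarrow> ('a \<Rightarrow> 'a \<Rightarrow> bool) \<Rightarrow> bool" where
  "is_core V E \<longleftrightarrow> (\<forall>f. graph_hom V E V E f \<longrightarrow> graph_aut V E f)"

end

theory Submission
  imports Defs
begin

text \<open>Let \<open>f\<close> be an endomorphism of \<open>G\<close>, and for every coordinate \<open>c\<close> let \<open>g\<^sub>c\<close> be the
  \<open>\<plusminus>1\<close>-valued function on the even cube recording whether \<open>c \<in> f u\<close>. The smallest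
  eigenvalue of the distance-\<open>k\<close> graph on the cube is the Krawtchouk value
  \<open>C(n,k) (n - 2k) / n\<close>, and for even \<open>k > n/2\<close> it is attained only at the Walsh characters of
  weight \<open>1\<close> and \<open>n - 1\<close>; this bounds the quadratic form \<open>\<langle>g\<^sub>c, A g\<^sub>c\<rangle>\<close> from below.
  Summed over \<open>c\<close>, these quadratic forms add up to \<open>\<Sum> (n - 2 d(f u, f v))\<close> over the pairs at
  distance \<open>k\<close>, which is bounded from above because \<open>f\<close> maps such pairs to pairs at distance
  at least \<open>k\<close>. The two bounds coincide, so everything is tight: on the even cube every \<open>g\<^sub>c\<close>
  is \<open>\<plusminus>\<close> the character of a singleton \<open>{\<pi> c}\<close>, and \<open>f\<close> maps pairs at distance \<open>k\<close> to
  pairs at distance \<open>k\<close>. Counting \<open>k\<close>-sets then shows that \<open>\<pi>\<close> is onto, so \<open>f\<close> is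
  injective, and an injective endomorphism of a finite graph is an automorphism.\<close>

section \<open>Walsh characters\<close>

lemma card_sym_diff_add:
  assumes "finite A" "finite B"
  shows "card A + card B = card (sym_diff A B) + 2 * card (A \<inter> B)"
proof -
  have "card (sym_diff A B) = card (A - B) + card (B - A)"
    using assms by (intro card_Un_disjoint) auto
  moreover have "card A = card (A \<inter> B) + card (A - B)" "card B = card (A \<inter> B) + card (B - A)"
    using assms card_Int_Diff[of A B] card_Int_Diff[of B A] by (simp_all add: Int_commute)
  ultimately show ?thesis by simp
qed

lemma neg_one_power_card_sym_diff:
  assumes "finite A" "finite B"
  shows "(-1::'a::ring_1) ^ card (sym_diff A B) = (-1) ^ card A * (-1) ^ card B"
proof -
  have "(-1::'a) ^ (card A + card B) = (-1) ^ card (sym_diff A B)"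
    using card_sym_diff_add[OF assms] by (simp add: power_add power_mult)
  then show ?thesis by (simp add: power_add)
qed

definition walsh :: "'a set \<Rightarrow> 'a set \<Rightarrow> real" where
  "walsh w u = (-1) ^ card (u \<inter> w)"

lemma walsh_commute: "walsh w u = walsh u w"
  unfolding walsh_def by (simp add: Int_commute)

lemma walsh_empty [simp]: "walsh w {} = 1" "walsh {} u = 1"
  unfolding walsh_def by simp_all

lemma walsh_singleton: "walsh {e} u = (if e \<in> u then -1 else 1)"
  unfolding walsh_def by simp

lemma walsh_sq: "walsh w u * walsh w u = 1"
  unfolding walsh_def by (simp flip: power_add add: power_mult[symmetric] mult_2[symmetric])

lemma walsh_sym_diff:
  assumes "finite u" "finite v"
  shows "walsh w (sym_diff u v) = walsh w u * walsh w v"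
proof -
  have "sym_diff u v \<inter> w = sym_diff (u \<inter> w) (v \<inter> w)" by blast
  then show ?thesis unfolding walsh_def using assms by (simp add: neg_one_power_card_sym_diff)
qed

lemma walsh_sym_diff_index:
  assumes "finite u"
  shows "walsh (sym_diff w w') u = walsh w u * walsh w' u"
proof -
  have "u \<inter> sym_diff w w' = sym_diff (u \<inter> w) (u \<inter> w')" by blast
  then show ?thesis unfolding walsh_def using assms by (simp add: neg_one_power_card_sym_diff)
qed

section \<open>Krawtchouk numbers\<close>

definition subsets_of_card :: "'a set \<Rightarrow> nat \<Rightarrow> 'a set set" where
  "subsets_of_card A m = {s. s \<subseteq> A \<and> card s = m}"

lemma finite_subsets_of_card: "finite A \<Longrightarrow> finite (subsets_of_card A m)"
  unfolding subsets_of_card_def by (rule finite_subset[of _ "Pow A"]) auto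

lemma card_subsets_of_card: "finite A \<Longrightarrow> card (subsets_of_card A m) = card A choose m"
  unfolding subsets_of_card_def by (rule n_subsets)

lemma subsets_of_card_0: "finite A \<Longrightarrow> subsets_of_card A 0 = {{}}"
  unfolding subsets_of_card_def by (auto dest: finite_subset)

lemma subsets_of_card_1: "subsets_of_card A 1 = (\<lambda>a. {a}) ` A"
  unfolding subsets_of_card_def by (auto simp: card_1_singleton_iff)

lemma subsets_of_card_Suc:
  assumes "finite A" "x \<in> A"
  shows "subsets_of_card A (Suc m)
    = subsets_of_card (A - {x}) (Suc m) \<union> insert x ` subsets_of_card (A - {x}) m"
proof (intro set_eqI iffI)
  fix s assume s: "s \<in> subsets_of_card A (Suc m)"
  then have "finite s" using assms(1) finite_subset unfolding subsets_of_card_def by blast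
  then show "s \<in> subsets_of_card (A - {x}) (Suc m) \<union> insert x ` subsets_of_card (A - {x}) m"
    using s unfolding subsets_of_card_def
    by (cases "x \<in> s") (auto intro!: image_eqI[of s "insert x" "s - {x}"])
next
  fix s assume "s \<in> subsets_of_card (A - {x}) (Suc m) \<union> insert x ` subsets_of_card (A - {x}) m"
  then show "s \<in> subsets_of_card A (Suc m)"
  proof
    assume "s \<in> insert x ` subsets_of_card (A - {x}) m"
    then obtain t where "t \<subseteq> A - {x}" "card t = m" "s = insert x t"
      unfolding subsets_of_card_def by blast
    moreover have "finite t" using \<open>t \<subseteq> A - {x}\<close> assms(1) finite_subset by blast
    moreover have "x \<notin> t" using \<open>t \<subseteq> A - {x}\<close> by blast
    ultimately show ?thesis using assms(2) unfolding subsets_of_card_def by auto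
  qed (auto simp: subsets_of_card_def)
qed

text \<open>For \<open>W \<subseteq> A\<close> and \<open>n = card A\<close> this is the value \<open>K\<^sub>m(card W)\<close> of the
  Krawtchouk polynomial of degree \<open>m\<close>, i.e. the eigenvalue of the distance-\<open>m\<close> graph of
  the cube \<open>Pow A\<close> belonging to the Walsh character of \<open>W\<close>.\<close>

definition krawtchouk :: "'a set \<Rightarrow> nat \<Rightarrow> 'a set \<Rightarrow> real" where
  "krawtchouk A m W = (\<Sum>s\<in>subsets_of_card A m. walsh W s)"

lemma krawtchouk_0: "finite A \<Longrightarrow> krawtchouk A 0 W = 1"
  unfolding krawtchouk_def by (simp add: subsets_of_card_0)

lemma krawtchouk_empty: "finite A \<Longrightarrow> krawtchouk A m {} = real (card A choose m)"
  unfolding krawtchouk_def by (simp add: card_subsets_of_card)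

lemma krawtchouk_1:
  assumes "finite A" "W \<subseteq> A"
  shows "krawtchouk A 1 W = real (card A) - 2 * real (card W)"
proof -
  have "krawtchouk A 1 W = (\<Sum>a\<in>A. if a \<in> W then -1 else 1)"
    unfolding krawtchouk_def subsets_of_card_1
    by (subst sum.reindex) (auto simp: inj_on_def walsh_commute[of W] walsh_singleton)
  also have "\<dots> = - real (card W) + real (card (A - W))"
    using assms by (simp add: sum.If_cases Int_absorb1 Diff_eq[symmetric])
  finally show ?thesis
    using assms by (simp add: card_Diff_subset finite_subset card_mono of_nat_diff)
qed

lemma krawtchouk_Suc:
  assumes "finite A" "x \<in> A"
  shows "krawtchouk A (Suc m) W = krawtchouk (A - {x}) (Suc m) (W - {x})
    + (if x \<in> W then -1 else 1) * krawtchouk (A - {x}) m (W - {x})"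
proof -
  let ?P = "subsets_of_card (A - {x}) (Suc m)" and ?Q = "subsets_of_card (A - {x}) m"
  have fin: "finite (A - {x})" using assms(1) by simp
  have "krawtchouk A (Suc m) W = (\<Sum>s\<in>?P. walsh W s) + (\<Sum>s\<in>insert x ` ?Q. walsh W s)"
    unfolding krawtchouk_def subsets_of_card_Suc[OF assms]
    by (rule sum.union_disjoint)
      (use fin in \<open>auto simp: finite_subsets_of_card subsets_of_card_def\<close>)
  also have "(\<Sum>s\<in>?P. walsh W s) = krawtchouk (A - {x}) (Suc m) (W - {x})"
    unfolding krawtchouk_def walsh_def
  proof (rule sum.cong[OF refl])
    fix s assume "s \<in> ?P"
    then have "s \<inter> (W - {x}) = s \<inter> W" unfolding subsets_of_card_def by blast
    then show "(-1) ^ card (s \<inter> W) = (-1) ^ card (s \<inter> (W - {x}))" by simp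
  qed
  also have "(\<Sum>s\<in>insert x ` ?Q. walsh W s) = (\<Sum>s\<in>?Q. walsh W (insert x s))"
  proof -
    have "inj_on (insert x) ?Q" unfolding inj_on_def subsets_of_card_def by blast
    then show ?thesis by (simp add: sum.reindex)
  qed
  also have "\<dots> = (if x \<in> W then -1 else 1) * krawtchouk (A - {x}) m (W - {x})"
    unfolding krawtchouk_def sum_distrib_left
  proof (rule sum.cong[OF refl])
    fix s assume "s \<in> ?Q"
    then have "x \<notin> s" "finite s" using fin finite_subset unfolding subsets_of_card_def by auto
    moreover have "s \<inter> (W - {x}) = s \<inter> W" using \<open>x \<notin> s\<close> by blast
    ultimately show "walsh W (insert x s) = (if x \<in> W then -1 else 1) * walsh (W - {x}) s"
      unfolding walsh_def by (cases "x \<in> W") (simp_all add: Int_insert_left)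
  qed
  finally show ?thesis .
qed

lemma walsh_subset: "W \<subseteq> A \<Longrightarrow> walsh W A = (-1) ^ card W"
  unfolding walsh_def by (simp add: Int_absorb1)

lemma walsh_Diff:
  assumes "finite A" "s \<subseteq> A"
  shows "walsh W (A - s) = walsh W A * walsh W s"
proof -
  have e: "A - s = sym_diff A s" using assms(2) by blast
  have "walsh W (sym_diff A s) = walsh W A * walsh W s"
    by (rule walsh_sym_diff) (use assms finite_subset in auto)
  then show ?thesis by (simp only: e[symmetric])
qed

lemma krawtchouk_complement_degree:
  assumes "finite A" "W \<subseteq> A" "m \<le> card A"
  shows "krawtchouk A (card A - m) W = (-1) ^ card W * krawtchouk A m W"
proof -
  have "bij_betw (\<lambda>s. A - s) (subsets_of_card A m) (subsets_of_card A (card A - m))"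
    by (rule bij_betw_byWitness[where f' = "\<lambda>s. A - s"])
      (use assms in \<open>auto simp: subsets_of_card_def card_Diff_subset finite_subset\<close>)
  then have "krawtchouk A (card A - m) W = (\<Sum>s\<in>subsets_of_card A m. walsh W (A - s))"
    unfolding krawtchouk_def by (simp add: sum.reindex_bij_betw)
  also have "\<dots> = (-1) ^ card W * krawtchouk A m W"
    unfolding krawtchouk_def sum_distrib_left
    by (rule sum.cong) (use assms in \<open>auto simp: walsh_Diff walsh_subset subsets_of_card_def\<close>)
  finally show ?thesis .
qed

lemma krawtchouk_complement_weight:
  assumes "finite A" "W \<subseteq> A"
  shows "krawtchouk A m (A - W) = (-1) ^ m * krawtchouk A m W"
  unfolding krawtchouk_def sum_distrib_left
proof (rule sum.cong[OF refl])
  fix s assume "s \<in> subsets_of_card A m"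
  then have "s \<subseteq> A" "card s = m" unfolding subsets_of_card_def by auto
  then show "walsh (A - W) s = (-1) ^ m * walsh W s"
    using assms walsh_Diff[of A W s] walsh_commute[of "A - W" s] walsh_commute[of W s]
    by (simp add: walsh_subset)
qed

lemma krawtchouk_abs_complement_weight:
  assumes "finite A" "W \<subseteq> A"
  shows "\<bar>krawtchouk A m (A - W)\<bar> = \<bar>krawtchouk A m W\<bar>"
  using krawtchouk_complement_weight[OF assms] by (simp add: abs_mult)

lemma krawtchouk_middle_odd:
  assumes "finite A" "W \<subseteq> A" "card A = 2 * m" "odd (card W)"
  shows "krawtchouk A m W = 0"
  using krawtchouk_complement_degree[OF assms(1,2), of m] assms(3,4) by simp

lemma real_binomial_absorb_comp:
  "real n * real ((n - 1) choose m) = (real n - real m) * real (n choose m)"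
proof (cases "m \<le> n")
  case True
  have "real ((n - m) * (n choose m)) = real (n * ((n - 1) choose m))"
    by (simp only: binomial_absorb_comp)
  then show ?thesis using True by (simp add: of_nat_diff)
qed (simp add: binomial_eq_0)

lemma real_binomial_absorption:
  "real n * real ((n - 1) choose m) = real (Suc m) * real (n choose Suc m)"
  by (simp only: of_nat_mult[symmetric] binomial_absorption)

text \<open>\<open>n\<close> times the Krawtchouk value of degree \<open>m\<close> at weight one
  (\<open>krawtchouk_singleton\<close>).\<close>

definition scaled_krawtchouk_one :: "nat \<Rightarrow> nat \<Rightarrow> real" where
  "scaled_krawtchouk_one n m = real (n choose m) * (real n - 2 * real m)"

lemma krawtchouk_singleton:
  assumes "finite A" "x \<in> A"
  shows "real (card A) * krawtchouk A m {x} = scaled_krawtchouk_one (card A) m"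
proof (cases m)
  case 0
  then show ?thesis using krawtchouk_0[OF assms(1)] by (simp add: scaled_krawtchouk_one_def)
next
  case (Suc m')
  let ?n = "card A"
  have "krawtchouk A m {x} = real ((?n - 1) choose Suc m') - real ((?n - 1) choose m')"
    using krawtchouk_Suc[OF assms, of m' "{x}"] assms Suc by (simp add: krawtchouk_empty)
  then have "real ?n * krawtchouk A m {x}
      = (real ?n - real (Suc m')) * real (?n choose Suc m') - real (Suc m') * real (?n choose Suc m')"
    by (simp only: right_diff_distrib real_binomial_absorb_comp[of ?n "Suc m'"]
        real_binomial_absorption[of ?n m'])
  then show ?thesis using Suc by (simp add: scaled_krawtchouk_one_def algebra_simps)
qed

lemma scaled_krawtchouk_one_pascal:
  assumes "n \<ge> 1"
  shows "real n * (scaled_krawtchouk_one (n - 1) (Suc m) + scaled_krawtchouk_one (n - 1) m)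
    = real (n - 1) * scaled_krawtchouk_one n (Suc m)"
proof -
  have "real n * (scaled_krawtchouk_one (n - 1) (Suc m) + scaled_krawtchouk_one (n - 1) m)
    = (real n - real (Suc m)) * real (n choose Suc m) * (real (n - 1) - 2 * real (Suc m))
      + real (Suc m) * real (n choose Suc m) * (real (n - 1) - 2 * real m)"
    unfolding scaled_krawtchouk_one_def distrib_left mult.assoc[symmetric]
    by (simp only: real_binomial_absorb_comp[of n "Suc m"] real_binomial_absorption[of n m])
  also have "\<dots> = real (n - 1) * scaled_krawtchouk_one n (Suc m)"
    using assms by (simp add: scaled_krawtchouk_one_def of_nat_diff algebra_simps)
  finally show ?thesis .
qed

text \<open>The inductive step of the bounds below: by \<open>krawtchouk_Suc\<close> the value at \<open>A\<close> is
  bounded by two values at \<open>A - {x}\<close>, and the bounds add up by Pascal's rule.\<close>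

lemma scaled_krawtchouk_one_step:
  fixes K a b :: real
  assumes "n \<ge> 2" "\<bar>K\<bar> \<le> a + b"
    and "real (n - 1) * a \<le> scaled_krawtchouk_one (n - 1) (Suc m)"
    and "real (n - 1) * b \<le> scaled_krawtchouk_one (n - 1) m"
  shows "real n * \<bar>K\<bar> \<le> scaled_krawtchouk_one n (Suc m)"
    and "\<bar>K\<bar> < a + b \<or> real (n - 1) * b < scaled_krawtchouk_one (n - 1) m
      \<Longrightarrow> real n * \<bar>K\<bar> < scaled_krawtchouk_one n (Suc m)"
proof -
  have n: "real n > 0" "real (n - 1) > 0" using assms(1) by simp_all
  have lhs: "real (n - 1) * (real n * \<bar>K\<bar>) = real n * (real (n - 1) * \<bar>K\<bar>)" by simp
  have K: "real (n - 1) * \<bar>K\<bar> \<le> real (n - 1) * a + real (n - 1) * b"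
    using assms(2) n(2) by (simp flip: distrib_left)
  have ab: "real (n - 1) * a + real (n - 1) * b
      \<le> scaled_krawtchouk_one (n - 1) (Suc m) + scaled_krawtchouk_one (n - 1) m"
    using assms(3,4) by simp
  have pascal: "real n * (scaled_krawtchouk_one (n - 1) (Suc m) + scaled_krawtchouk_one (n - 1) m)
      = real (n - 1) * scaled_krawtchouk_one n (Suc m)"
    using scaled_krawtchouk_one_pascal assms(1) by simp
  have "real (n - 1) * (real n * \<bar>K\<bar>) \<le> real (n - 1) * scaled_krawtchouk_one n (Suc m)"
    unfolding lhs pascal[symmetric] using K ab n(1) by (simp add: mult_left_mono)
  then show "real n * \<bar>K\<bar> \<le> scaled_krawtchouk_one n (Suc m)"
    using n(2) by (simp add: mult_le_cancel_left_pos)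
  assume "\<bar>K\<bar> < a + b \<or> real (n - 1) * b < scaled_krawtchouk_one (n - 1) m"
  moreover have "\<bar>K\<bar> < a + b \<Longrightarrow> real (n - 1) * \<bar>K\<bar> < real (n - 1) * a + real (n - 1) * b"
    using n(2) by (simp flip: distrib_left)
  ultimately have "real (n - 1) * \<bar>K\<bar>
      < scaled_krawtchouk_one (n - 1) (Suc m) + scaled_krawtchouk_one (n - 1) m"
    using K ab assms(3) by linarith
  then have "real (n - 1) * (real n * \<bar>K\<bar>) < real (n - 1) * scaled_krawtchouk_one n (Suc m)"
    unfolding lhs pascal[symmetric] using n(1) by simp
  then show "real n * \<bar>K\<bar> < scaled_krawtchouk_one n (Suc m)"
    using n(2) by (simp add: mult_less_cancel_left_pos)
qed

lemma krawtchouk_abs_Suc_le: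
  assumes "finite A" "x \<in> A"
  shows "\<bar>krawtchouk A (Suc m) W\<bar>
    \<le> \<bar>krawtchouk (A - {x}) (Suc m) (W - {x})\<bar> + \<bar>krawtchouk (A - {x}) m (W - {x})\<bar>"
  using krawtchouk_Suc[OF assms, of m W]
  by (cases "x \<in> W") (simp_all add: abs_triangle_ineq abs_triangle_ineq4)

lemma krawtchouk_abs_weight_one:
  assumes "finite A" "W \<subseteq> A" "card W = 1 \<or> card (A - W) = 1" "2 * m \<le> card A"
  shows "real (card A) * \<bar>krawtchouk A m W\<bar> = scaled_krawtchouk_one (card A) m"
proof -
  have "0 \<le> scaled_krawtchouk_one (card A) m"
    using assms(4) by (simp add: scaled_krawtchouk_one_def)
  moreover have "real (card A) * \<bar>krawtchouk A m {x}\<bar> = scaled_krawtchouk_one (card A) m"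
    if "x \<in> A" for x
  proof -
    have "\<bar>real (card A) * krawtchouk A m {x}\<bar> = scaled_krawtchouk_one (card A) m"
      using krawtchouk_singleton[OF assms(1) that, of m] calculation by simp
    then show ?thesis by (simp add: abs_mult)
  qed
  moreover have "\<bar>krawtchouk A m W\<bar> = \<bar>krawtchouk A m (A - W)\<bar>"
    using krawtchouk_abs_complement_weight[OF assms(1,2)] by simp
  ultimately show ?thesis
    using assms(2,3) by (metis card_1_singletonE Diff_subset insert_subset)
qed

lemma obtain_odd_card_Diff_singleton:
  assumes "finite A" "W \<subseteq> A" "W \<noteq> {}" "W \<noteq> A"
  obtains x where "x \<in> A" "odd (card (W - {x}))"
proof (cases "even (card W)")
  case True
  obtain x where x: "x \<in> W" using assms(3) by blast
  then have "card (W - {x}) = card W - 1" using assms(1,2) finite_subset by auto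
  moreover have "finite W" using assms(1,2) finite_subset by blast
  then have "card W \<noteq> 0" using assms(3) by simp
  ultimately have "odd (card (W - {x}))" using True by presburger
  then show ?thesis using that x assms(2) by blast
next
  case False
  obtain x where "x \<in> A" "x \<notin> W" using assms(2,4) by blast
  then show ?thesis using that False by simp
qed

text \<open>If \<open>card A = 2 * m + 1\<close>, one of the two terms of \<open>krawtchouk_Suc\<close> is made to vanish by
  \<open>krawtchouk_middle_odd\<close>.\<close>

lemma krawtchouk_abs_le_Suc:
  assumes "finite A" "W \<subseteq> A" "W \<noteq> {}" "W \<noteq> A" "2 * Suc m < card A" "2 \<le> card W"
    and IH: "\<And>x m'. x \<in> A \<Longrightarrow> W - {x} \<noteq> {} \<Longrightarrow> W - {x} \<noteq> A - {x} \<Longrightarrow> 2 * m' < card A - 1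
      \<Longrightarrow> real (card A - 1) * \<bar>krawtchouk (A - {x}) m' (W - {x})\<bar>
        \<le> scaled_krawtchouk_one (card A - 1) m'"
  shows "real (card A) * \<bar>krawtchouk A (Suc m) W\<bar> \<le> scaled_krawtchouk_one (card A) (Suc m)"
proof -
  let ?n = "card A"
  have n: "2 \<le> ?n" using assms(5) by simp
  show ?thesis
  proof (cases "2 * Suc m < ?n - 1")
    case True
    obtain x where x: "x \<in> W" using assms(3) by blast
    have xA: "x \<in> A" using x assms(2) by blast
    have "card (W - {x}) \<ge> 1" using x assms(1,2,6) finite_subset by fastforce
    then have W1: "W - {x} \<noteq> {}" by (metis card.empty not_one_le_zero)
    have W2: "W - {x} \<noteq> A - {x}" using x assms(2,4) by blast
    have "2 * m < ?n - 1" using True by simp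
    from scaled_krawtchouk_one_step(1)[OF n krawtchouk_abs_Suc_le[OF assms(1) xA]
        IH[OF xA W1 W2 True] IH[OF xA W1 W2 this]]
    show ?thesis .
  next
    case False
    then have n_odd: "?n - 1 = 2 * Suc m" using assms(5) by linarith
    obtain x where x: "x \<in> A" "odd (card (W - {x}))"
      using obtain_odd_card_Diff_singleton[OF assms(1-4)] by blast
    have cardA': "card (A - {x}) = 2 * Suc m" using x(1) n_odd assms(1) by simp
    have W1: "W - {x} \<noteq> {}" using x(2) by (metis card.empty even_zero)
    have W2: "W - {x} \<noteq> A - {x}" using x(2) cardA' by (metis even_mult_iff even_numeral)
    have "krawtchouk (A - {x}) (Suc m) (W - {x}) = 0"
      using krawtchouk_middle_odd[OF _ _ cardA' x(2)] assms(1,2) by blast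
    then have a: "real (?n - 1) * \<bar>krawtchouk (A - {x}) (Suc m) (W - {x})\<bar>
        \<le> scaled_krawtchouk_one (?n - 1) (Suc m)"
      unfolding n_odd by (simp add: scaled_krawtchouk_one_def)
    have "2 * m < ?n - 1" using n_odd by simp
    from scaled_krawtchouk_one_step(1)[OF n krawtchouk_abs_Suc_le[OF assms(1) x(1)]
        a IH[OF x(1) W1 W2 this]]
    show ?thesis .
  qed
qed

lemma krawtchouk_abs_le:
  assumes "finite A" "W \<subseteq> A" "W \<noteq> {}" "W \<noteq> A" "2 * m < card A"
  shows "real (card A) * \<bar>krawtchouk A m W\<bar> \<le> scaled_krawtchouk_one (card A) m"
  using assms
proof (induction "card A" arbitrary: A W m rule: less_induct)
  case less
  have finW: "finite W" using less.prems(1,2) finite_subset by blast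
  have W: "1 \<le> card W" "card W < card A"
    using less.prems finW by (auto simp: Suc_le_eq card_gt_0_iff psubset_card_mono)
  show ?case
  proof (cases m)
    case 0
    then show ?thesis using krawtchouk_0[OF less.prems(1)] by (simp add: scaled_krawtchouk_one_def)
  next
    case (Suc m')
    show ?thesis
    proof (cases "card W = 1 \<or> card (A - W) = 1")
      case True
      then show ?thesis
        using krawtchouk_abs_weight_one[OF less.prems(1,2) True, of m] less.prems(5) by simp
    next
      case False
      have "card (A - W) = card A - card W" using finW less.prems(2) by (simp add: card_Diff_subset)
      then have "2 \<le> card W" using False W by linarith
      moreover have "real (card A - 1) * \<bar>krawtchouk (A - {x}) m'' (W - {x})\<bar>
          \<le> scaled_krawtchouk_one (card A - 1) m''"
        if "x \<in> A" "W - {x} \<noteq> {}" "W - {x} \<noteq> A - {x}" "2 * m'' < card A - 1" for x m''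
        using less.hyps[of "A - {x}" "W - {x}" m''] less.prems(1,2) that by auto
      ultimately show ?thesis
        using krawtchouk_abs_le_Suc[OF less.prems(1-4)] less.prems(5) unfolding Suc by blast
    qed
  qed
qed

lemma krawtchouk_singleton_pos:
  assumes "finite A" "x \<in> A" "2 * m < card A"
  shows "krawtchouk A m {x} > 0"
proof -
  have "scaled_krawtchouk_one (card A) m > 0"
    using assms(3) by (simp add: scaled_krawtchouk_one_def)
  then have "0 < real (card A) * krawtchouk A m {x}"
    using krawtchouk_singleton[OF assms(1,2), of m] by simp
  then show ?thesis using assms(3) zero_less_mult_pos by fastforce
qed

lemma krawtchouk_abs_less_weight_two:
  assumes "finite A" "W \<subseteq> A" "card W = 2 \<or> card (A - W) = 2" "1 \<le> m" "2 * m + 2 \<le> card A"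
  shows "real (card A) * \<bar>krawtchouk A m W\<bar> < scaled_krawtchouk_one (card A) m"
proof -
  let ?n = "card A"
  obtain m' where m: "m = Suc m'" using assms(4) by (cases m) auto
  have "real ?n * \<bar>krawtchouk A m V\<bar> < scaled_krawtchouk_one ?n m" if V: "V \<subseteq> A" "card V = 2" for V
  proof -
    obtain x y where xy: "V = {x, y}" "x \<noteq> y" using card_2_iff[THEN iffD1, OF V(2)] by blast
    have x: "x \<in> A" and y: "y \<in> A - {x}" using V(1) xy by auto
    have A': "finite (A - {x})" "card (A - {x}) = ?n - 1" using assms(1) x by auto
    have "V - {x} = {y}" using xy by blast
    then have K: "krawtchouk A m V = krawtchouk (A - {x}) m {y} - krawtchouk (A - {x}) m' {y}"
      using krawtchouk_Suc[OF assms(1) x, of m' V] xy unfolding m by simp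
    have "krawtchouk (A - {x}) m {y} > 0" "krawtchouk (A - {x}) m' {y} > 0"
      using krawtchouk_singleton_pos[OF A'(1) y] A'(2) assms(5) m by simp_all
    then have "\<bar>krawtchouk A m V\<bar> < krawtchouk (A - {x}) m {y} + krawtchouk (A - {x}) m' {y}"
      unfolding K by linarith
    from scaled_krawtchouk_one_step(2)[OF _ order.strict_implies_order[OF this] _ _ disjI1[OF this]]
    show ?thesis using krawtchouk_singleton[OF A'(1) y] A'(2) assms(5) unfolding m by simp
  qed
  moreover have "\<bar>krawtchouk A m (A - W)\<bar> = \<bar>krawtchouk A m W\<bar>"
    by (rule krawtchouk_abs_complement_weight[OF assms(1,2)])
  ultimately show ?thesis using assms(2,3) by (metis Diff_subset)
qed

lemma krawtchouk_abs_less_Suc: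
  assumes "finite A" "W \<subseteq> A" "3 \<le> card W" "card W + 3 \<le> card A" "1 \<le> m"
    "2 * Suc m + 2 \<le> card A"
    and IH: "\<And>x. x \<in> A \<Longrightarrow> real (card A - 1) * \<bar>krawtchouk (A - {x}) m (W - {x})\<bar>
        < scaled_krawtchouk_one (card A - 1) m"
  shows "real (card A) * \<bar>krawtchouk A (Suc m) W\<bar> < scaled_krawtchouk_one (card A) (Suc m)"
proof -
  let ?n = "card A"
  have finW: "finite W" using assms(1,2) finite_subset by blast
  obtain x where x: "x \<in> W" using assms(3) by (metis card.empty ex_in_conv not_numeral_le_zero)
  have xA: "x \<in> A" using x assms(2) by blast
  have A': "finite (A - {x})" "card (A - {x}) = ?n - 1" using assms(1) xA by auto
  have W': "W - {x} \<subseteq> A - {x}" "card (W - {x}) = card W - 1"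
    using assms(2) x finW by (blast, simp)
  have "card (W - {x}) \<noteq> 0" "card (W - {x}) \<noteq> card (A - {x})"
    using W'(2) assms(3,4) A'(2) by simp_all
  then have "W - {x} \<noteq> {}" "W - {x} \<noteq> A - {x}" by (metis card.empty, metis)
  with krawtchouk_abs_le[OF A'(1) W'(1)]
  have a: "real (?n - 1) * \<bar>krawtchouk (A - {x}) (Suc m) (W - {x})\<bar>
      \<le> scaled_krawtchouk_one (?n - 1) (Suc m)"
    using A'(2) assms(6) by simp
  from scaled_krawtchouk_one_step(2)[OF _ krawtchouk_abs_Suc_le[OF assms(1) xA]
      a less_imp_le[OF IH[OF xA]] disjI2[OF IH[OF xA]]]
  show ?thesis using assms(6) by simp
qed

lemma krawtchouk_abs_less:
  assumes "finite A" "W \<subseteq> A" "2 \<le> card W" "card W + 2 \<le> card A" "1 \<le> m"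
    "2 * m + 2 \<le> card A"
  shows "real (card A) * \<bar>krawtchouk A m W\<bar> < scaled_krawtchouk_one (card A) m"
  using assms
proof (induction m arbitrary: A W)
  case (Suc m)
  let ?n = "card A"
  have finW: "finite W" using Suc.prems(1,2) finite_subset by blast
  have cardAW: "card (A - W) = ?n - card W" using finW Suc.prems(2) by (simp add: card_Diff_subset)
  show ?case
  proof (cases "m = 0")
    case True
    have "2 \<le> real (card W)" "real (card W) + 2 \<le> real ?n" using Suc.prems(3,4) by simp_all
    then have "\<bar>krawtchouk A 1 W\<bar> < real ?n - 2" using krawtchouk_1[OF Suc.prems(1,2)] by linarith
    then show ?thesis
      using Suc.prems(6) True by (simp add: scaled_krawtchouk_one_def mult_strict_left_mono)
  next
    case False
    show ?thesis
    proof (cases "card W = 2 \<or> card (A - W) = 2")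
      case True
      then show ?thesis using krawtchouk_abs_less_weight_two[OF Suc.prems(1,2) _ Suc.prems(5,6)] by blast
    next
      case not_two: False
      have W: "3 \<le> card W" "card W + 3 \<le> ?n" using Suc.prems(3,4) not_two cardAW by auto
      have m: "2 * m + 4 \<le> ?n" using Suc.prems(6) by simp
      have "real (card A - 1) * \<bar>krawtchouk (A - {x}) m (W - {x})\<bar>
          < scaled_krawtchouk_one (card A - 1) m" if x: "x \<in> A" for x
      proof -
        have "card (W - {x}) \<ge> card W - 1" "card (W - {x}) \<le> card W"
          using finW by (auto simp: card_Diff_singleton_if)
        moreover have cA: "card (A - {x}) = ?n - 1" using x Suc.prems(1) by simp
        ultimately have "2 \<le> card (W - {x})" "card (W - {x}) + 2 \<le> card (A - {x})"
          "1 \<le> m" "2 * m + 2 \<le> card (A - {x})" using W m False by linarith+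
        from Suc.IH[OF _ _ this] show ?thesis using Suc.prems(1,2) cA by auto
      qed
      with krawtchouk_abs_less_Suc[OF Suc.prems(1,2) W] show ?thesis
        using Suc.prems(6) False by simp
    qed
  qed
qed simp

lemma scaled_krawtchouk_one_complement:
  "m \<le> n \<Longrightarrow> scaled_krawtchouk_one n (n - m) = - scaled_krawtchouk_one n m"
  by (simp add: scaled_krawtchouk_one_def binomial_symmetric[symmetric] of_nat_diff algebra_simps)

lemma krawtchouk_trivial_weight:
  assumes "finite A" "even m" "W = {} \<or> W = A"
  shows "krawtchouk A m W = real (card A choose m)"
  using assms krawtchouk_empty[OF assms(1)] krawtchouk_complement_weight[OF assms(1), of "{}" m]
  by auto

lemma krawtchouk_ge_weight_one:
  assumes "finite A" "W \<subseteq> A" "even k" "card A + 2 \<le> 2 * k" "k < card A"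
  shows "real (card A) * krawtchouk A k W \<ge> scaled_krawtchouk_one (card A) k"
    and "card W \<noteq> 1 \<Longrightarrow> card W \<noteq> card A - 1
      \<Longrightarrow> real (card A) * krawtchouk A k W > scaled_krawtchouk_one (card A) k"
proof -
  let ?n = "card A" and ?m = "card A - k"
  have m: "k = ?n - ?m" "2 * ?m + 2 \<le> ?n" "1 \<le> ?m" using assms(4,5) by auto
  have abs_K: "\<bar>krawtchouk A k W\<bar> = \<bar>krawtchouk A ?m W\<bar>"
    using krawtchouk_complement_degree[OF assms(1,2), of ?m] m(1) by (simp add: abs_mult)
  have bound: "scaled_krawtchouk_one ?n ?m = - scaled_krawtchouk_one ?n k"
    using scaled_krawtchouk_one_complement[of k ?n] assms(5) by simp
  have low: "real ?n * krawtchouk A k W \<ge> - (real ?n * \<bar>krawtchouk A ?m W\<bar>)"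
    unfolding abs_K[symmetric] by (simp add: abs_ge_minus_self mult_left_mono flip: mult_minus_right)
  have trivial: "real ?n * krawtchouk A k W > scaled_krawtchouk_one ?n k" if "W = {} \<or> W = A"
  proof -
    have "real (?n choose k) > 0" using assms(5) by simp
    then show ?thesis using krawtchouk_trivial_weight[OF assms(1,3) that] assms(4)
      by (simp add: scaled_krawtchouk_one_def algebra_simps)
  qed
  show "real ?n * krawtchouk A k W \<ge> scaled_krawtchouk_one ?n k"
  proof (cases "W = {} \<or> W = A")
    case False
    then have "real ?n * \<bar>krawtchouk A ?m W\<bar> \<le> scaled_krawtchouk_one ?n ?m"
      using krawtchouk_abs_le[OF assms(1,2)] m(2) by simp
    then show ?thesis using low bound by linarith
  qed (use trivial in fastforce)
  assume W: "card W \<noteq> 1" "card W \<noteq> ?n - 1"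
  show "real ?n * krawtchouk A k W > scaled_krawtchouk_one ?n k"
  proof (cases "W = {} \<or> W = A")
    case False
    have "finite W" using assms(1,2) finite_subset by blast
    then have "0 < card W" using False by (simp add: card_gt_0_iff)
    moreover have "card W < ?n" using False assms(2) psubset_card_mono[OF assms(1)] by blast
    ultimately have "2 \<le> card W" "card W + 2 \<le> ?n" using W by linarith+
    then have "real ?n * \<bar>krawtchouk A ?m W\<bar> < scaled_krawtchouk_one ?n ?m"
      using krawtchouk_abs_less[OF assms(1,2)] m(2,3) by simp
    then show ?thesis using low bound by linarith
  qed (use trivial in blast)
qed

section \<open>Fourier analysis on the cube\<close>

lemma sum_walsh_Pow:
  assumes "finite N" "z \<subseteq> N"
  shows "(\<Sum>w\<in>Pow N. walsh w z) = (if z = {} then 2 ^ card N else 0)"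
proof (cases "z = {}")
  case False
  then obtain c where c: "c \<in> z" by blast
  have fin: "finite z" using assms finite_subset by blast
  have bij: "bij_betw (\<lambda>w. sym_diff w {c}) (Pow N) (Pow N)"
    by (rule bij_betw_byWitness[where f' = "\<lambda>w. sym_diff w {c}"]) (use c assms(2) in auto)
  have "(\<Sum>w\<in>Pow N. walsh w z) = (\<Sum>w\<in>Pow N. walsh (sym_diff w {c}) z)"
    using sum.reindex_bij_betw[OF bij, of "\<lambda>w. walsh w z"] by simp
  also have "\<dots> = (\<Sum>w\<in>Pow N. - walsh w z)"
  proof -
    have "walsh {c} z = -1" using c by (simp add: walsh_singleton)
    then show ?thesis by (simp add: walsh_sym_diff_index[OF fin])
  qed
  finally show ?thesis using False by (simp add: sum_negf)
qed (use assms in \<open>simp add: card_Pow\<close>)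

definition fourier :: "'a set \<Rightarrow> ('a set \<Rightarrow> real) \<Rightarrow> 'a set \<Rightarrow> real" where
  "fourier N g w = (\<Sum>u\<in>Pow N. g u * walsh w u)"

lemma sum_walsh_convolution:
  assumes "finite N" "u \<subseteq> N" "s \<subseteq> N"
  shows "(\<Sum>v\<in>Pow N. g v * (\<Sum>w\<in>Pow N. walsh w u * walsh w v * walsh w s))
    = 2 ^ card N * g (sym_diff u s)"
proof -
  have fin: "finite u" "finite s" using assms finite_subset by auto
  have "(\<Sum>w\<in>Pow N. walsh w u * walsh w v * walsh w s)
      = (if v = sym_diff u s then 2 ^ card N else 0)" if v: "v \<subseteq> N" for v
  proof -
    have "finite v" using v assms(1) finite_subset by blast
    then have "walsh w u * walsh w v * walsh w s = walsh w (sym_diff (sym_diff u v) s)" for w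
      using fin by (simp add: walsh_sym_diff)
    moreover have "sym_diff (sym_diff u v) s \<subseteq> N" using assms v by blast
    moreover have "sym_diff (sym_diff u v) s = {} \<longleftrightarrow> v = sym_diff u s" by blast
    ultimately show ?thesis using sum_walsh_Pow[OF assms(1)] by simp
  qed
  then have "(\<Sum>v\<in>Pow N. g v * (\<Sum>w\<in>Pow N. walsh w u * walsh w v * walsh w s))
      = (\<Sum>v\<in>Pow N. if v = sym_diff u s then g v * 2 ^ card N else 0)"
    by (intro sum.cong) auto
  also have "\<dots> = g (sym_diff u s) * 2 ^ card N"
  proof -
    have "sym_diff u s \<in> Pow N" using assms by blast
    then show ?thesis using assms(1) by (simp add: sum.delta)
  qed
  finally show ?thesis by simp
qed

lemma fourier_quadratic_form:
  assumes "finite N" "T \<subseteq> Pow N"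
  shows "(\<Sum>w\<in>Pow N. (fourier N g w)\<^sup>2 * (\<Sum>s\<in>T. walsh w s))
    = 2 ^ card N * (\<Sum>u\<in>Pow N. \<Sum>s\<in>T. g u * g (sym_diff u s))"
proof -
  let ?U = "Pow N"
  define F where "F u v s w = g u * g v * (walsh w u * walsh w v * walsh w s)" for u v s w
  have "(fourier N g w)\<^sup>2 * (\<Sum>s\<in>T. walsh w s) = (\<Sum>s\<in>T. \<Sum>u\<in>?U. \<Sum>v\<in>?U. F u v s w)" for w
  proof -
    have "(fourier N g w)\<^sup>2 * (\<Sum>s\<in>T. walsh w s)
        = (\<Sum>s\<in>T. walsh w s * ((\<Sum>u\<in>?U. g u * walsh w u) * (\<Sum>v\<in>?U. g v * walsh w v)))"
      unfolding fourier_def power2_eq_square by (simp add: sum_distrib_right mult.commute)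
    also have "\<dots> = (\<Sum>s\<in>T. walsh w s * (\<Sum>u\<in>?U. \<Sum>v\<in>?U. (g u * walsh w u) * (g v * walsh w v)))"
      by (simp only: sum_product)
    also have "\<dots> = (\<Sum>s\<in>T. \<Sum>u\<in>?U. \<Sum>v\<in>?U. F u v s w)"
      unfolding F_def sum_distrib_left by (simp only: mult_ac)
    finally show ?thesis .
  qed
  then have "(\<Sum>w\<in>?U. (fourier N g w)\<^sup>2 * (\<Sum>s\<in>T. walsh w s))
      = (\<Sum>w\<in>?U. \<Sum>s\<in>T. \<Sum>u\<in>?U. \<Sum>v\<in>?U. F u v s w)"
    by simp
  also have "\<dots> = (\<Sum>s\<in>T. \<Sum>w\<in>?U. \<Sum>u\<in>?U. \<Sum>v\<in>?U. F u v s w)" by (rule sum.swap)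
  also have "\<dots> = (\<Sum>s\<in>T. \<Sum>u\<in>?U. \<Sum>w\<in>?U. \<Sum>v\<in>?U. F u v s w)"
    by (rule sum.cong[OF refl], rule sum.swap)
  also have "\<dots> = (\<Sum>s\<in>T. \<Sum>u\<in>?U. \<Sum>v\<in>?U. \<Sum>w\<in>?U. F u v s w)"
    by (rule sum.cong[OF refl], rule sum.cong[OF refl], rule sum.swap)
  also have "\<dots> = (\<Sum>u\<in>?U. \<Sum>s\<in>T. \<Sum>v\<in>?U. \<Sum>w\<in>?U. F u v s w)" by (rule sum.swap)
  also have "\<dots> = (\<Sum>u\<in>?U. \<Sum>s\<in>T. g u * (2 ^ card N * g (sym_diff u s)))"
  proof (intro sum.cong refl)
    fix u s assume "u \<in> ?U" "s \<in> T"
    then have "g u * (\<Sum>v\<in>?U. g v * (\<Sum>w\<in>?U. walsh w u * walsh w v * walsh w s))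
        = g u * (2 ^ card N * g (sym_diff u s))"
      using sum_walsh_convolution[OF assms(1), of u s g] assms(2) by auto
    then show "(\<Sum>v\<in>?U. \<Sum>w\<in>?U. F u v s w) = g u * (2 ^ card N * g (sym_diff u s))"
      unfolding F_def sum_distrib_left by (simp add: mult_ac)
  qed
  finally show ?thesis by (simp add: sum_distrib_left mult_ac)
qed

lemma parseval:
  "finite N \<Longrightarrow> (\<Sum>w\<in>Pow N. (fourier N g w)\<^sup>2) = 2 ^ card N * (\<Sum>u\<in>Pow N. (g u)\<^sup>2)"
  using fourier_quadratic_form[of N "{{}}" g] by (simp add: power2_eq_square)

lemma fourier_inversion:
  assumes "finite N" "u \<subseteq> N"
  shows "(\<Sum>w\<in>Pow N. fourier N g w * walsh w u) = 2 ^ card N * g u"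
proof -
  have "(\<Sum>w\<in>Pow N. fourier N g w * walsh w u)
      = (\<Sum>v\<in>Pow N. g v * (\<Sum>w\<in>Pow N. walsh w u * walsh w v * walsh w {}))"
    unfolding fourier_def sum_distrib_right sum_distrib_left
    by (subst sum.swap) (simp add: mult_ac)
  also have "\<dots> = 2 ^ card N * g u"
    using sum_walsh_convolution[OF assms, of "{}" g] by simp
  finally show ?thesis .
qed

text \<open>The quadratic form \<open>\<langle>g, A g\<rangle>\<close> of the adjacency operator \<open>A\<close> of the
  distance-\<open>k\<close> graph on the cube \<open>Pow N\<close>.\<close>

definition distance_form :: "'a set \<Rightarrow> nat \<Rightarrow> ('a set \<Rightarrow> real) \<Rightarrow> real" where
  "distance_form N k g = (\<Sum>u\<in>Pow N. \<Sum>s\<in>subsets_of_card N k. g u * g (sym_diff u s))"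

lemma distance_form_fourier:
  assumes "finite N"
  shows "(\<Sum>w\<in>Pow N. (fourier N g w)\<^sup>2 * (real (card N) * krawtchouk N k w - c))
    = 2 ^ card N * (real (card N) * distance_form N k g - c * (\<Sum>u\<in>Pow N. (g u)\<^sup>2))"
proof -
  have K: "(\<Sum>w\<in>Pow N. (fourier N g w)\<^sup>2 * krawtchouk N k w) = 2 ^ card N * distance_form N k g"
    unfolding krawtchouk_def distance_form_def
    by (rule fourier_quadratic_form[OF assms]) (auto simp: subsets_of_card_def)
  have "(\<Sum>w\<in>Pow N. (fourier N g w)\<^sup>2 * (real (card N) * krawtchouk N k w - c))
      = real (card N) * (\<Sum>w\<in>Pow N. (fourier N g w)\<^sup>2 * krawtchouk N k w)
        - c * (\<Sum>w\<in>Pow N. (fourier N g w)\<^sup>2)"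
    by (simp add: right_diff_distrib sum_subtractf sum_distrib_left mult_ac)
  also have "\<dots> = real (card N) * (2 ^ card N * distance_form N k g)
      - c * (2 ^ card N * (\<Sum>u\<in>Pow N. (g u)\<^sup>2))"
    by (simp only: K parseval[OF assms])
  finally show ?thesis by (simp add: right_diff_distrib mult_ac)
qed

lemma distance_form_ge:
  assumes "finite N" "even k" "card N + 2 \<le> 2 * k" "k < card N"
  shows "real (card N) * distance_form N k g
    \<ge> scaled_krawtchouk_one (card N) k * (\<Sum>u\<in>Pow N. (g u)\<^sup>2)"
proof -
  have "0 \<le> (\<Sum>w\<in>Pow N. (fourier N g w)\<^sup>2
      * (real (card N) * krawtchouk N k w - scaled_krawtchouk_one (card N) k))"
    using krawtchouk_ge_weight_one(1)[OF assms(1) _ assms(2-4)]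
    by (intro sum_nonneg mult_nonneg_nonneg) auto
  then have "0 \<le> 2 ^ card N * (real (card N) * distance_form N k g
      - scaled_krawtchouk_one (card N) k * (\<Sum>u\<in>Pow N. (g u)\<^sup>2))"
    unfolding distance_form_fourier[OF assms(1)] .
  then show ?thesis by (simp add: zero_le_mult_iff power_le_zero_eq)
qed

lemma fourier_eq_0_if_distance_form_eq:
  assumes "finite N" "even k" "card N + 2 \<le> 2 * k" "k < card N"
    and "real (card N) * distance_form N k g
      = scaled_krawtchouk_one (card N) k * (\<Sum>u\<in>Pow N. (g u)\<^sup>2)"
    and "w \<subseteq> N" "card w \<noteq> 1" "card w \<noteq> card N - 1"
  shows "fourier N g w = 0"
proof -
  let ?D = "\<lambda>w. real (card N) * krawtchouk N k w - scaled_krawtchouk_one (card N) k"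
  have "(\<Sum>w\<in>Pow N. (fourier N g w)\<^sup>2 * ?D w) = 0"
    unfolding distance_form_fourier[OF assms(1)] assms(5) by simp
  moreover have "\<forall>w\<in>Pow N. 0 \<le> (fourier N g w)\<^sup>2 * ?D w"
    using krawtchouk_ge_weight_one(1)[OF assms(1) _ assms(2-4)] by auto
  ultimately have "(fourier N g w)\<^sup>2 * ?D w = 0"
    using sum_nonneg_eq_0_iff[of "Pow N" "\<lambda>w. (fourier N g w)\<^sup>2 * ?D w"] assms(1,6)
    by (simp del: mult_eq_0_iff)
  moreover have "?D w > 0" using krawtchouk_ge_weight_one(2)[OF assms(1,6,2-4,7,8)] by simp
  ultimately show ?thesis by simp
qed

section \<open>The even cube\<close>

lemma even_cube_eq: "even_cube n = {u \<in> Pow {..<n}. even (card u)}"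
  unfolding even_cube_def by blast

lemma finite_even_cube: "finite (even_cube n)"
  unfolding even_cube_eq by simp

lemma walsh_lessThan_even_cube: "u \<subseteq> {..<n} \<Longrightarrow> walsh {..<n} u = (-1) ^ card u"
  by (simp add: walsh_commute walsh_subset)

lemma sum_even_cube_walsh:
  assumes "n \<ge> 1" "z \<subseteq> {..<n}"
  shows "(\<Sum>u\<in>even_cube n. walsh z u) = (if z = {} \<or> z = {..<n} then 2 ^ (n - 1) else 0)"
proof -
  let ?N = "{..<n}"
  have "(\<Sum>u\<in>even_cube n. walsh z u) = (\<Sum>u\<in>Pow ?N. if even (card u) then walsh z u else 0)"
    unfolding even_cube_eq by (rule sum.inter_filter) simp
  also have "\<dots> = (\<Sum>u\<in>Pow ?N. (walsh u z + walsh u (sym_diff z ?N)) / 2)"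
  proof (rule sum.cong[OF refl])
    fix u assume u: "u \<in> Pow ?N"
    then have "walsh (sym_diff z ?N) u = walsh z u * (-1) ^ card u"
      using walsh_sym_diff_index[of u z ?N] walsh_lessThan_even_cube[of u n] finite_subset by auto
    then show "(if even (card u) then walsh z u else 0) = (walsh u z + walsh u (sym_diff z ?N)) / 2"
      by (simp add: walsh_commute[of u])
  qed
  also have "\<dots> = ((\<Sum>u\<in>Pow ?N. walsh u z) + (\<Sum>u\<in>Pow ?N. walsh u (sym_diff z ?N))) / 2"
    by (simp only: sum.distrib[symmetric] sum_divide_distrib)
  also have "\<dots> = ((if z = {} then 2 ^ n else 0) + (if z = ?N then 2 ^ n else 0)) / 2"
  proof -
    have "sym_diff z ?N \<subseteq> ?N" "sym_diff z ?N = {} \<longleftrightarrow> z = ?N" using assms(2) by auto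
    then have "(\<Sum>u\<in>Pow ?N. walsh u (sym_diff z ?N)) = (if z = ?N then 2 ^ n else 0)"
      using sum_walsh_Pow[of ?N "sym_diff z ?N"] by simp
    moreover have "(\<Sum>u\<in>Pow ?N. walsh u z) = (if z = {} then 2 ^ n else 0)"
      using sum_walsh_Pow[of ?N z] assms(2) by simp
    ultimately show ?thesis by (simp only:)
  qed
  finally have sum: "(\<Sum>u\<in>even_cube n. walsh z u)
      = ((if z = {} then 2 ^ n else 0) + (if z = ?N then 2 ^ n else 0)) / 2" .
  have "0 \<in> ?N" using assms(1) by simp
  then have "?N \<noteq> {}" by blast
  then show ?thesis unfolding sum using assms(1)
    by (cases "z = {}"; cases "z = ?N") (auto simp: power_eq_if)
qed

lemma walsh_lessThan_Diff_singleton: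
  assumes "v \<in> even_cube n" "e < n"
  shows "walsh ({..<n} - {e}) v = walsh {e} v"
proof -
  have v: "v \<subseteq> {..<n}" "even (card v)" "finite v"
    using assms(1) finite_subset unfolding even_cube_def by auto
  have eq: "{..<n} - {e} = sym_diff {..<n} {e}" using assms(2) by blast
  have "walsh (sym_diff {..<n} {e}) v = walsh {..<n} v * walsh {e} v"
    by (rule walsh_sym_diff_index[OF v(3)])
  then have "walsh ({..<n} - {e}) v = walsh {..<n} v * walsh {e} v"
    by (simp only: eq[symmetric])
  then show ?thesis using walsh_lessThan_even_cube[OF v(1)] v(2) by simp
qed

lemma fourier_lessThan_Diff_singleton:
  assumes "\<forall>u\<in>Pow {..<n}. u \<notin> even_cube n \<longrightarrow> g u = 0" "e < n"
  shows "fourier {..<n} g ({..<n} - {e}) = fourier {..<n} g {e}"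
  unfolding fourier_def
proof (rule sum.cong[OF refl])
  fix v assume "v \<in> Pow {..<n}"
  then show "g v * walsh ({..<n} - {e}) v = g v * walsh {e} v"
    using walsh_lessThan_Diff_singleton[OF _ assms(2), of v] assms(1)
    by (cases "v \<in> even_cube n") simp_all
qed

lemma subset_card_1_or_codim_1:
  assumes "finite N" "N \<noteq> {}" "w \<subseteq> N" "card w = 1 \<or> card w = card N - 1"
  shows "w \<in> (\<lambda>e. {e}) ` N \<union> (\<lambda>e. N - {e}) ` N"
  using assms(4)
proof
  assume "card w = 1"
  then show ?thesis using assms(3) by (auto simp: card_1_singleton_iff)
next
  assume "card w = card N - 1"
  then have "card (N - w) = 1"
    using assms(1-3) card_Diff_subset[of w N] finite_subset card_gt_0_iff[of N] by auto
  then obtain e where "N - w = {e}" using card_1_singletonE by blast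
  then have "w = N - {e}" "e \<in> N" using assms(3) by blast+
  then show ?thesis by blast
qed

text \<open>On the even cube the characters of \<open>{e}\<close> and of its complement coincide; so a function
  living on the even cube whose spectrum lies on the weights \<open>1\<close> and \<open>n - 1\<close> is a linear
  combination of the coordinate characters.\<close>

lemma fourier_expansion_weight_one:
  assumes "n \<ge> 3" and g0: "\<forall>u\<in>Pow {..<n}. u \<notin> even_cube n \<longrightarrow> g u = 0"
    and spec: "\<forall>w\<in>Pow {..<n}. card w \<noteq> 1 \<and> card w \<noteq> n - 1 \<longrightarrow> fourier {..<n} g w = 0"
    and u: "u \<in> even_cube n"
  shows "g u = (\<Sum>e<n. fourier {..<n} g {e} / 2 ^ (n - 1) * walsh {e} u)"
proof -
  let ?N = "{..<n}" and ?F = "\<lambda>w. fourier {..<n} g w * walsh w u"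
  let ?W1 = "(\<lambda>e. {e}) ` ?N" and ?W2 = "(\<lambda>e. ?N - {e}) ` ?N"
  have "0 \<in> ?N" using assms(1) by simp
  then have "?N \<noteq> {}" by blast
  then have weights: "fourier ?N g w = 0" if "w \<in> Pow ?N - (?W1 \<union> ?W2)" for w
    using spec subset_card_1_or_codim_1[of ?N w] that by auto
  have disj: "?W1 \<inter> ?W2 = {}"
  proof (rule ccontr)
    assume "?W1 \<inter> ?W2 \<noteq> {}"
    then obtain e e' where "e' \<in> ?N" "{e} = ?N - {e'}" by blast
    then have "card {e} = card (?N - {e'})" by simp
    then show False using \<open>e' \<in> ?N\<close> assms(1) by simp
  qed
  have "2 ^ n * g u = (\<Sum>w\<in>Pow ?N. ?F w)"
    using fourier_inversion[of ?N u g] u unfolding even_cube_def by simp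
  also have "\<dots> = (\<Sum>w\<in>?W1 \<union> ?W2. ?F w)"
    by (rule sum.mono_neutral_right) (use weights in auto)
  also have "\<dots> = (\<Sum>w\<in>?W1. ?F w) + (\<Sum>w\<in>?W2. ?F w)"
    by (rule sum.union_disjoint[OF _ _ disj]) simp_all
  also have "(\<Sum>w\<in>?W1. ?F w) = (\<Sum>e<n. ?F {e})"
    by (rule sum.reindex_cong[where l = "\<lambda>e. {e}"]) auto
  also have "(\<Sum>w\<in>?W2. ?F w) = (\<Sum>e<n. ?F (?N - {e}))"
    by (rule sum.reindex_cong[where l = "\<lambda>e. ?N - {e}"]) (auto simp: inj_on_def)
  also have "\<dots> = (\<Sum>e<n. ?F {e})"
    using fourier_lessThan_Diff_singleton[OF g0] walsh_lessThan_Diff_singleton[OF u]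
    by (simp add: walsh_commute[of _ u])
  finally have "2 * 2 ^ (n - 1) * g u = 2 * (\<Sum>e<n. ?F {e})"
    using assms(1) by (simp add: power_eq_if)
  then have "g u = (\<Sum>e<n. ?F {e}) / 2 ^ (n - 1)" by (simp add: field_simps)
  then show ?thesis by (simp add: sum_divide_distrib walsh_commute[of _ u])
qed

lemma sum_even_cube_walsh_small:
  assumes "z \<subseteq> {..<n}" "card z < n"
  shows "(\<Sum>u\<in>even_cube n. walsh z u) = (if z = {} then 2 ^ (n - 1) else 0)"
proof -
  have "z \<noteq> {..<n}" using assms(2) by auto
  then show ?thesis using sum_even_cube_walsh[OF _ assms(1)] assms(2) by simp
qed

lemma sq_sum_walsh_singleton_mult:
  assumes "finite u"
  shows "(\<Sum>e\<in>N. a e * walsh {e} u)\<^sup>2 * walsh z u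
    = (\<Sum>(d, d')\<in>N \<times> N. a d * a d' * walsh (sym_diff (sym_diff {d} {d'}) z) u)"
proof -
  have "walsh (sym_diff (sym_diff {d} {d'}) z) u = walsh {d} u * walsh {d'} u * walsh z u" for d d'
    using assms by (simp add: walsh_sym_diff_index)
  moreover have "(\<Sum>e\<in>N. a e * walsh {e} u)\<^sup>2 * walsh z u
      = (\<Sum>d\<in>N. \<Sum>d'\<in>N. (a d * walsh {d} u) * (a d' * walsh {d'} u) * walsh z u)"
    by (simp add: power2_eq_square sum_distrib_left sum_distrib_right mult_ac)
  ultimately show ?thesis by (simp add: sum.cartesian_product mult_ac)
qed

lemma sum_even_cube_walsh_sq_linear:
  assumes "n \<ge> 5" and rep: "\<forall>u\<in>even_cube n. g u = (\<Sum>e<n. a e * walsh {e} u)"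
    and sq: "\<forall>u\<in>even_cube n. (g u)\<^sup>2 = 1" and z: "z \<subseteq> {..<n}" "card z \<le> 2"
  shows "(\<Sum>u\<in>even_cube n. walsh z u)
    = 2 ^ (n - 1) * (\<Sum>(d, d')\<in>{(d, d'). d < n \<and> d' < n \<and> sym_diff {d} {d'} = z}. a d * a d')"
proof -
  let ?N = "{..<n}" and ?Z = "\<lambda>d d'. sym_diff (sym_diff {d} {d'}) z"
  have "(\<Sum>u\<in>even_cube n. walsh z u) = (\<Sum>u\<in>even_cube n. (g u)\<^sup>2 * walsh z u)"
    using sq by simp
  also have "\<dots> = (\<Sum>u\<in>even_cube n. \<Sum>(d, d')\<in>?N \<times> ?N. a d * a d' * walsh (?Z d d') u)"
  proof (rule sum.cong[OF refl])
    fix u assume u: "u \<in> even_cube n"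
    then have "finite u" unfolding even_cube_def using finite_subset by blast
    then show "(g u)\<^sup>2 * walsh z u = (\<Sum>(d, d')\<in>?N \<times> ?N. a d * a d' * walsh (?Z d d') u)"
      using rep u sq_sum_walsh_singleton_mult[of u a ?N z] by simp
  qed
  also have "\<dots> = (\<Sum>(d, d')\<in>?N \<times> ?N. a d * a d' * (\<Sum>u\<in>even_cube n. walsh (?Z d d') u))"
    by (subst sum.swap) (simp add: sum_distrib_left case_prod_unfold)
  also have "\<dots> = (\<Sum>(d, d')\<in>?N \<times> ?N. if sym_diff {d} {d'} = z then 2 ^ (n - 1) * (a d * a d') else 0)"
  proof (rule sum.cong[OF refl], clarify)
    fix d d' assume d: "d < n" "d' < n"
    have "?Z d d' \<subseteq> {d, d'} \<union> z" by blast
    then have "card (?Z d d') \<le> card ({d, d'} \<union> z)" using z(1) finite_subset by (intro card_mono) auto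
    also have "\<dots> \<le> card {d, d'} + card z" by (rule card_Un_le)
    also have "\<dots> < n" using z(2) assms(1) by (cases "d = d'") simp_all
    finally have "card (?Z d d') < n" .
    moreover have "?Z d d' \<subseteq> ?N" using d z(1) by blast
    moreover have "?Z d d' = {} \<longleftrightarrow> sym_diff {d} {d'} = z" by blast
    ultimately show "a d * a d' * (\<Sum>u\<in>even_cube n. walsh (?Z d d') u)
        = (if sym_diff {d} {d'} = z then 2 ^ (n - 1) * (a d * a d') else 0)"
      using sum_even_cube_walsh_small[of "?Z d d'" n] by simp
  qed
  also have "\<dots> = 2 ^ (n - 1) * (\<Sum>(d, d')\<in>{(d, d'). d < n \<and> d' < n \<and> sym_diff {d} {d'} = z}. a d * a d')"
  proof -
    have "{p \<in> ?N \<times> ?N. sym_diff {fst p} {snd p} = z}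
        = {(d, d'). d < n \<and> d' < n \<and> sym_diff {d} {d'} = z}" by auto
    then show ?thesis by (simp add: sum.inter_filter[symmetric] sum_distrib_left case_prod_unfold)
  qed
  finally show ?thesis .
qed

lemma linear_sign_function_eq_character:
  assumes "n \<ge> 5" and rep: "\<forall>u\<in>even_cube n. g u = (\<Sum>e<n. a e * walsh {e} u)"
    and sq: "\<forall>u\<in>even_cube n. (g u)\<^sup>2 = 1"
  shows "\<exists>e<n. \<forall>u\<in>even_cube n. g u = a e * walsh {e} u"
proof -
  note expand = sum_even_cube_walsh_sq_linear[OF assms]
  have "{(d, d'). d < n \<and> d' < n \<and> sym_diff {d} {d'} = {}} = (\<lambda>d. (d, d)) ` {..<n}" by auto
  then have "2 ^ (n - 1) = 2 ^ (n - 1) * (\<Sum>d<n. a d * a d)"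
    using expand[of "{}"] sum_even_cube_walsh_small[of "{}" n] assms(1)
    by (simp add: sum.reindex inj_on_def)
  then have sum_sq: "(\<Sum>d<n. a d * a d) = 1" by simp
  have orth: "a e * a e' = 0" if "e < n" "e' < n" "e \<noteq> e'" for e e'
  proof -
    have "{(d, d'). d < n \<and> d' < n \<and> sym_diff {d} {d'} = {e, e'}} = {(e, e'), (e', e)}"
      using that by auto
    then have "0 = 2 ^ (n - 1) * (a e * a e' + a e' * a e)"
      using expand[of "{e, e'}"] sum_even_cube_walsh_small[of "{e, e'}" n] that assms(1) by simp
    then show ?thesis by (simp add: disj_commute)
  qed
  obtain e where e: "e < n" "a e \<noteq> 0"
    using sum_sq by (metis (no_types, lifting) lessThan_iff mult_zero_left sum.neutral zero_neq_one)
  have "a d = 0" if "d < n" "d \<noteq> e" for d using orth[OF e(1) that(1)] that(2) e(2) by simp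
  then have "(\<Sum>d<n. a d * walsh {d} u) = a e * walsh {e} u" for u
    using e(1) by (subst sum.remove[of _ e]) auto
  then show ?thesis using rep e(1) by auto
qed

section \<open>Homomorphisms of distance graphs on the even cube\<close>

lemma sym_diff_mem_even_cube:
  assumes "u \<in> even_cube n" "s \<subseteq> {..<n}" "even (card s)"
  shows "sym_diff u s \<in> even_cube n"
proof -
  have u: "u \<subseteq> {..<n}" "even (card u)" "finite u" and "finite s"
    using assms finite_subset unfolding even_cube_def by auto
  then have "even (card (sym_diff u s))"
    using card_sym_diff_add[of u s] assms(3) by presburger
  moreover have "sym_diff u s \<subseteq> {..<n}" using u(1) assms(2) by blast
  ultimately show ?thesis unfolding even_cube_def by blast
qed

lemma sum_sign_indicator:
  assumes "finite N" "D \<subseteq> N"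
  shows "(\<Sum>c\<in>N. if c \<in> D then -1 else 1) = real (card N) - 2 * real (card D)"
proof -
  have "(\<Sum>c\<in>N. if c \<in> D then -1 else 1) = - real (card D) + real (card (N - D))"
    using assms by (simp add: sum.If_cases Int_absorb1 Diff_eq[symmetric])
  then show ?thesis
    using assms by (simp add: card_Diff_subset finite_subset card_mono of_nat_diff)
qed

lemma eq_if_sum_le:
  fixes a b :: "'i \<Rightarrow> 'a::ordered_cancel_comm_monoid_add"
  assumes "finite I" "\<forall>i\<in>I. a i \<le> b i" "sum b I \<le> sum a I"
  shows "\<forall>i\<in>I. a i = b i"
proof (rule ccontr)
  assume "\<not> (\<forall>i\<in>I. a i = b i)"
  then have "\<exists>i\<in>I. a i < b i" using assms(2) by (auto simp: order.strict_iff_order)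
  then have "sum a I < sum b I" using sum_strict_mono_ex1[OF assms(1)] assms(2) by blast
  then show False using assms(3) by simp
qed

locale even_cube_distance_hom =
  fixes n k :: nat and E :: "nat set \<Rightarrow> nat set \<Rightarrow> bool" and f :: "nat set \<Rightarrow> nat set"
  assumes even_k: "even k" and k_gt_half: "n + 2 \<le> 2 * k" and k_less: "k < n"
    and dist_k_edge: "\<forall>x\<in>even_cube n. \<forall>y\<in>even_cube n. hamming x y = k \<longrightarrow> E x y"
    and edge_dist_ge: "\<forall>x\<in>even_cube n. \<forall>y\<in>even_cube n. E x y \<longrightarrow> hamming x y \<ge> k"
    and hom: "graph_hom (even_cube n) E (even_cube n) E f"
begin

lemma f_mem: "u \<in> even_cube n \<Longrightarrow> f u \<in> even_cube n"
  using hom unfolding graph_hom_def by blast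

lemma f_subset: "u \<in> even_cube n \<Longrightarrow> f u \<subseteq> {..<n}"
  using f_mem unfolding even_cube_def by blast

lemma hamming_f_ge:
  assumes "u \<in> even_cube n" "s \<in> subsets_of_card {..<n} k"
  shows "hamming (f u) (f (sym_diff u s)) \<ge> k"
proof -
  have v: "sym_diff u s \<in> even_cube n"
    using sym_diff_mem_even_cube[OF assms(1)] assms(2) even_k unfolding subsets_of_card_def by auto
  have "hamming u (sym_diff u s) = k"
    using assms(2) unfolding hamming_def subsets_of_card_def by (auto intro: arg_cong[where f = card])
  then have "E u (sym_diff u s)" using dist_k_edge assms(1) v by blast
  then have "E (f u) (f (sym_diff u s))" using hom assms(1) v unfolding graph_hom_def by blast
  then show ?thesis using edge_dist_ge f_mem assms(1) v by blast
qed

definition coordinate_sign :: "nat \<Rightarrow> nat set \<Rightarrow> real" where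
  "coordinate_sign c u = (if u \<in> even_cube n then if c \<in> f u then -1 else 1 else 0)"

lemma coordinate_sign_sq: "u \<in> even_cube n \<Longrightarrow> (coordinate_sign c u)\<^sup>2 = 1"
  unfolding coordinate_sign_def by simp

lemma sum_coordinate_sign_sq: "(\<Sum>u\<in>Pow {..<n}. (coordinate_sign c u)\<^sup>2) = real (card (even_cube n))"
proof -
  have "(\<Sum>u\<in>Pow {..<n}. (coordinate_sign c u)\<^sup>2) = (\<Sum>u\<in>Pow {..<n}. if u \<in> even_cube n then 1 else 0)"
    by (rule sum.cong) (simp_all add: coordinate_sign_def)
  also have "\<dots> = real (card {u \<in> Pow {..<n}. u \<in> even_cube n})"
    by (simp add: sum.inter_filter[symmetric])
  also have "{u \<in> Pow {..<n}. u \<in> even_cube n} = even_cube n" unfolding even_cube_def by blast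
  finally show ?thesis .
qed

lemma sum_coordinate_sign_mult:
  assumes "u \<in> even_cube n" "v \<in> even_cube n"
  shows "(\<Sum>c<n. coordinate_sign c u * coordinate_sign c v) = real n - 2 * real (hamming (f u) (f v))"
proof -
  have "(\<Sum>c<n. coordinate_sign c u * coordinate_sign c v)
      = (\<Sum>c<n. if c \<in> sym_diff (f u) (f v) then -1 else 1)"
    by (rule sum.cong) (use assms in \<open>auto simp: coordinate_sign_def\<close>)
  also have "\<dots> = real n - 2 * real (hamming (f u) (f v))"
    using sum_sign_indicator[of "{..<n}" "sym_diff (f u) (f v)"] f_subset[OF assms(1)]
      f_subset[OF assms(2)] unfolding hamming_def by auto
  finally show ?thesis .
qed

lemma sum_distance_form_coordinate_sign:
  "(\<Sum>c<n. distance_form {..<n} k (coordinate_sign c))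
    = (\<Sum>u\<in>even_cube n. \<Sum>s\<in>subsets_of_card {..<n} k.
        real n - 2 * real (hamming (f u) (f (sym_diff u s))))"
proof -
  let ?S = "subsets_of_card {..<n} k"
  have sd: "sym_diff u s \<in> even_cube n" if "u \<in> even_cube n" "s \<in> ?S" for u s
    using sym_diff_mem_even_cube[OF that(1)] that(2) even_k unfolding subsets_of_card_def by auto
  have "distance_form {..<n} k (coordinate_sign c)
      = (\<Sum>u\<in>even_cube n. \<Sum>s\<in>?S. coordinate_sign c u * coordinate_sign c (sym_diff u s))" for c
    unfolding distance_form_def
    by (rule sum.mono_neutral_right) (auto simp: even_cube_def coordinate_sign_def)
  then have "(\<Sum>c<n. distance_form {..<n} k (coordinate_sign c))
      = (\<Sum>u\<in>even_cube n. \<Sum>s\<in>?S. \<Sum>c<n. coordinate_sign c u * coordinate_sign c (sym_diff u s))"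
    by (simp add: sum.swap[of _ "{..<n}"])
  also have "\<dots> = (\<Sum>u\<in>even_cube n. \<Sum>s\<in>?S. real n - 2 * real (hamming (f u) (f (sym_diff u s))))"
    by (intro sum.cong refl sum_coordinate_sign_mult sd)
  finally show ?thesis .
qed

lemma distance_form_coordinate_sign_ge:
  "real n * distance_form {..<n} k (coordinate_sign c)
    \<ge> scaled_krawtchouk_one n k * real (card (even_cube n))"
  using distance_form_ge[of "{..<n}" k "coordinate_sign c"] even_k k_gt_half k_less
  by (simp add: sum_coordinate_sign_sq)

text \<open>Summed over the coordinates, the lower bound \<open>distance_form_coordinate_sign_ge\<close> meets
  the upper bound coming from \<open>hamming_f_ge\<close>; hence both are attained.\<close>

lemma coordinate_sign_extremal:
  shows "c < n \<Longrightarrow> real n * distance_form {..<n} k (coordinate_sign c)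
      = scaled_krawtchouk_one n k * real (card (even_cube n))"
    and "u \<in> even_cube n \<Longrightarrow> s \<in> subsets_of_card {..<n} k
      \<Longrightarrow> hamming (f u) (f (sym_diff u s)) = k"
proof -
  let ?S = "subsets_of_card {..<n} k" and ?K = "scaled_krawtchouk_one n k * real (card (even_cube n))"
  let ?T = "\<lambda>u s. real n - 2 * real (hamming (f u) (f (sym_diff u s)))"
  have T: "\<forall>u\<in>even_cube n. \<forall>s\<in>?S. ?T u s \<le> real n - 2 * real k"
    using hamming_f_ge by simp
  have const: "(\<Sum>u\<in>even_cube n. \<Sum>s\<in>?S. real n - 2 * real k) = ?K"
    by (simp add: card_subsets_of_card scaled_krawtchouk_one_def)
  have upper: "(\<Sum>c<n. distance_form {..<n} k (coordinate_sign c)) \<le> ?K"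
    unfolding sum_distance_form_coordinate_sign const[symmetric] using T by (intro sum_mono) auto
  have "(\<Sum>c<n. real n * distance_form {..<n} k (coordinate_sign c)) \<le> (\<Sum>c<n. ?K)"
    using upper by (simp add: sum_distrib_left[symmetric] mult_left_mono)
  then have eq: "\<forall>c\<in>{..<n}. ?K = real n * distance_form {..<n} k (coordinate_sign c)"
    by (intro eq_if_sum_le) (simp_all add: distance_form_coordinate_sign_ge)
  then show "c < n \<Longrightarrow> real n * distance_form {..<n} k (coordinate_sign c) = ?K" by simp
  have "real n * (\<Sum>c<n. distance_form {..<n} k (coordinate_sign c)) = (\<Sum>c<n. ?K)"
    unfolding sum_distrib_left using eq by (intro sum.cong) auto
  then have "(\<Sum>c<n. distance_form {..<n} k (coordinate_sign c)) = ?K"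
    using k_less by simp
  moreover have "\<forall>u\<in>even_cube n. (\<Sum>s\<in>?S. ?T u s) \<le> (\<Sum>s\<in>?S. real n - 2 * real k)"
    using T by (intro ballI sum_mono) blast
  ultimately have "\<forall>u\<in>even_cube n. (\<Sum>s\<in>?S. ?T u s) = (\<Sum>s\<in>?S. real n - 2 * real k)"
    unfolding sum_distance_form_coordinate_sign const[symmetric]
    by (intro eq_if_sum_le) (simp_all add: finite_even_cube)
  then have "\<forall>u\<in>even_cube n. \<forall>s\<in>?S. ?T u s = real n - 2 * real k"
    by (intro ballI eq_if_sum_le) (use T in \<open>auto simp: finite_subsets_of_card\<close>)
  then show "u \<in> even_cube n \<Longrightarrow> s \<in> ?S \<Longrightarrow> hamming (f u) (f (sym_diff u s)) = k" by simp
qed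

end

context even_cube_distance_hom
begin

lemma five_le_n: "5 \<le> n"
proof -
  have "n \<noteq> 4"
  proof
    assume "n = 4"
    then have "k = 3" using k_gt_half k_less by simp
    then show False using even_k by simp
  qed
  then show ?thesis using k_gt_half k_less by linarith
qed

lemma coordinate_sign_eq_character:
  assumes "c < n"
  shows "\<exists>e<n. \<exists>\<sigma>. \<forall>u\<in>even_cube n. coordinate_sign c u = \<sigma> * walsh {e} u"
proof -
  let ?g = "coordinate_sign c"
  have "fourier {..<n} ?g w = 0" if "w \<subseteq> {..<n}" "card w \<noteq> 1" "card w \<noteq> n - 1" for w
    using fourier_eq_0_if_distance_form_eq[of "{..<n}" k ?g w] that even_k k_gt_half k_less
      coordinate_sign_extremal(1)[OF assms] by (simp add: sum_coordinate_sign_sq)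
  then have "\<forall>u\<in>even_cube n. ?g u = (\<Sum>e<n. fourier {..<n} ?g {e} / 2 ^ (n - 1) * walsh {e} u)"
    using fourier_expansion_weight_one[of n ?g] five_le_n by (auto simp: coordinate_sign_def)
  from linear_sign_function_eq_character[OF five_le_n this] show ?thesis
    using coordinate_sign_sq by blast
qed

lemma coordinate_permutation:
  obtains \<pi> where "\<forall>c<n. \<pi> c < n"
    and "\<forall>c<n. \<forall>u\<in>even_cube n. \<forall>v\<in>even_cube n.
      c \<in> sym_diff (f u) (f v) \<longleftrightarrow> \<pi> c \<in> sym_diff u v"
proof -
  have "\<exists>e<n. \<forall>u\<in>even_cube n. \<forall>v\<in>even_cube n. c \<in> sym_diff (f u) (f v) \<longleftrightarrow> e \<in> sym_diff u v"
    if c: "c < n" for c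
  proof -
    obtain e \<sigma> where e: "e < n" and \<sigma>: "\<forall>u\<in>even_cube n. coordinate_sign c u = \<sigma> * walsh {e} u"
      using coordinate_sign_eq_character[OF c] by blast
    have prod: "coordinate_sign c u * coordinate_sign c v = walsh {e} u * walsh {e} v"
      if "u \<in> even_cube n" "v \<in> even_cube n" for u v
    proof -
      have "\<sigma> * \<sigma> = 1"
        using coordinate_sign_sq[OF that(1), of c] \<sigma> that(1) walsh_sq[of "{e}" u]
        by (simp add: power2_eq_square mult_ac)
      then show ?thesis using \<sigma> that by (simp add: algebra_simps)
    qed
    show ?thesis
    proof (intro exI[of _ e] conjI e ballI)
      fix u v assume "u \<in> even_cube n" "v \<in> even_cube n"
      with prod[OF this] show "c \<in> sym_diff (f u) (f v) \<longleftrightarrow> e \<in> sym_diff u v"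
        by (auto simp: coordinate_sign_def walsh_singleton split: if_splits)
    qed
  qed
  then show thesis using that by metis
qed

end

text \<open>If every \<open>k\<close>-subset of \<open>A\<close> has exactly \<open>k\<close> preimages, then comparing the subsets
  \<open>insert e s\<^sub>0\<close> and \<open>insert e' s\<^sub>0\<close> shows that all fibres of \<open>\<pi>\<close> have the same size.\<close>

lemma image_eq_if_card_preimage_subsets:
  assumes "finite A" "\<pi> ` A \<subseteq> A" "1 \<le> k" "k < card A"
    and pre: "\<forall>s\<in>subsets_of_card A k. card {c\<in>A. \<pi> c \<in> s} = k"
  shows "\<pi> ` A = A"
proof -
  let ?fib = "\<lambda>e. card {c\<in>A. \<pi> c = e}"
  have fib_eq: "?fib e = ?fib e'" if "e \<in> A" "e' \<in> A" "e \<noteq> e'" for e e'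
  proof -
    have "card (A - {e, e'}) = card A - 2" using that assms(1) by (simp add: card_Diff_subset)
    then have "k - 1 \<le> card (A - {e, e'})" using assms(3,4) by linarith
    then obtain s where s: "s \<subseteq> A - {e, e'}" "card s = k - 1"
      by (rule obtain_subset_with_card_n)
    have split: "?fib x + card {c\<in>A. \<pi> c \<in> s} = k" if "x \<in> A" "x \<notin> s" for x
    proof -
      have "finite s" using s(1) assms(1) finite_subset by blast
      then have "insert x s \<in> subsets_of_card A k"
        using that s assms(3) unfolding subsets_of_card_def by auto
      then have "card {c\<in>A. \<pi> c \<in> insert x s} = k" using pre by blast
      moreover have "{c\<in>A. \<pi> c \<in> insert x s} = {c\<in>A. \<pi> c = x} \<union> {c\<in>A. \<pi> c \<in> s}" by blast
      moreover have "{c\<in>A. \<pi> c = x} \<inter> {c\<in>A. \<pi> c \<in> s} = {}" using that(2) by blast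
      ultimately show ?thesis using assms(1) by (simp add: card_Un_disjoint)
    qed
    have "e \<notin> s" "e' \<notin> s" using s(1) by blast+
    with split[OF that(1)] split[OF that(2)] show ?thesis by simp
  qed
  show ?thesis
  proof (rule antisym[OF assms(2)], rule subsetI, rule ccontr)
    fix e assume e: "e \<in> A" "e \<notin> \<pi> ` A"
    have "A \<noteq> {}" using assms(4) by (metis card.empty not_less0)
    then obtain c where c: "c \<in> A" by blast
    then have "{c'\<in>A. \<pi> c' = \<pi> c} \<noteq> {}" by blast
    then have "?fib (\<pi> c) > 0" using assms(1) by (simp add: card_gt_0_iff)
    moreover have "\<pi> c \<noteq> e" "\<pi> c \<in> A" using c e assms(2) by auto
    moreover have "{c\<in>A. \<pi> c = e} = {}" using e(2) by blast
    ultimately show False using fib_eq[of "\<pi> c" e] e(1) by simp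
  qed
qed

context even_cube_distance_hom
begin

lemma card_coordinate_preimage:
  assumes coord: "\<forall>c<n. \<forall>u\<in>even_cube n. \<forall>v\<in>even_cube n.
      c \<in> sym_diff (f u) (f v) \<longleftrightarrow> \<pi> c \<in> sym_diff u v"
    and s: "s \<in> subsets_of_card {..<n} k"
  shows "card {c\<in>{..<n}. \<pi> c \<in> s} = k"
proof -
  have empty: "{} \<in> even_cube n" unfolding even_cube_def by simp
  have s_mem: "s \<in> even_cube n" using s even_k unfolding subsets_of_card_def even_cube_def by auto
  have "{c\<in>{..<n}. \<pi> c \<in> s} = sym_diff (f {}) (f s)"
  proof (rule set_eqI)
    fix c
    show "c \<in> {c\<in>{..<n}. \<pi> c \<in> s} \<longleftrightarrow> c \<in> sym_diff (f {}) (f s)"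
    proof (cases "c < n")
      case True
      then show ?thesis using coord[rule_format, OF True empty s_mem] by auto
    next
      case False
      then show ?thesis using f_subset[OF empty] f_subset[OF s_mem] by auto
    qed
  qed
  then show ?thesis
    using coordinate_sign_extremal(2)[OF empty s] unfolding hamming_def by simp
qed

lemma inj_on_even_cube: "inj_on f (even_cube n)"
proof
  obtain \<pi> where \<pi>: "\<forall>c<n. \<pi> c < n"
    and coord: "\<forall>c<n. \<forall>u\<in>even_cube n. \<forall>v\<in>even_cube n.
      c \<in> sym_diff (f u) (f v) \<longleftrightarrow> \<pi> c \<in> sym_diff u v"
    by (rule coordinate_permutation)
  have "\<pi> ` {..<n} \<subseteq> {..<n}" "1 \<le> k" "k < card {..<n}" using \<pi> k_gt_half k_less by auto
  with image_eq_if_card_preimage_subsets card_coordinate_preimage[OF coord]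
  have surj: "\<pi> ` {..<n} = {..<n}" by blast
  fix u v assume u: "u \<in> even_cube n" and v: "v \<in> even_cube n" and "f u = f v"
  show "u = v"
  proof (rule ccontr)
    assume "u \<noteq> v"
    then obtain e where e: "e \<in> u \<longleftrightarrow> e \<notin> v" by (auto simp: set_eq_iff)
    then have "e \<in> {..<n}" using u v unfolding even_cube_def by blast
    then obtain c where c: "c < n" "\<pi> c = e" using surj by (metis imageE lessThan_iff)
    have "c \<in> sym_diff (f u) (f v) \<longleftrightarrow> \<pi> c \<in> sym_diff u v"
      using coord c(1) u v by blast
    then show False using \<open>f u = f v\<close> c(2) e by blast
  qed
qed

end

lemma graph_aut_if_inj_graph_hom:
  assumes "finite V" "graph_hom V E V E f" "inj_on f V"
  shows "graph_aut V E f"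
proof -
  have img: "f ` V = V" using assms endo_inj_surj unfolding graph_hom_def by blast
  let ?P = "{p \<in> V \<times> V. E (fst p) (snd p)}"
  let ?F = "map_prod f f"
  have "?F ` ?P \<subseteq> ?P" using assms(2) unfolding graph_hom_def by auto
  moreover have "inj_on ?F ?P" using assms(3) by (auto simp: inj_on_def)
  moreover have "finite ?P" using assms(1) by (auto intro: finite_subset[of _ "V \<times> V"])
  ultimately have edges: "?F ` ?P = ?P" using endo_inj_surj by blast
  have "E x y \<longleftrightarrow> E (f x) (f y)" if "x \<in> V" "y \<in> V" for x y
  proof
    assume "E (f x) (f y)"
    then have "(f x, f y) \<in> ?F ` ?P" using edges that img by auto
    then obtain x' y' where "(x', y') \<in> ?P" "f x' = f x" "f y' = f y" by auto
    moreover have "x' = x" "y' = y"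
      using calculation that inj_onD[OF assms(3)] by auto
    ultimately show "E x y" by simp
  qed (use assms(2) that in \<open>auto simp: graph_hom_def\<close>)
  then show ?thesis unfolding graph_aut_def bij_betw_def using assms(3) img by blast
qed

theorem corollary4p8:
  fixes n k :: nat and E :: "nat set \<Rightarrow> nat set \<Rightarrow> bool"
  assumes "n > 0" and "even k"
    and "real n / 2 + 1 \<le> real k" and "k \<le> n - 1"
    and "is_graph (even_cube n) E"
    and "\<forall>x\<in>even_cube n. \<forall>y\<in>even_cube n. hamming x y = k \<longrightarrow> E x y"
    and "\<forall>x\<in>even_cube n. \<forall>y\<in>even_cube n. E x y \<longrightarrow> hamming x y \<ge> k"
  shows "is_core (even_cube n) E"
  unfolding is_core_def
proof (intro allI impI)
  fix f assume hom: "graph_hom (even_cube n) E (even_cube n) E f"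
  have "n + 2 \<le> 2 * k" "k < n" using assms(1,3,4) by linarith+
  then interpret even_cube_distance_hom n k E f
    using assms(2,6,7) hom by unfold_locales
  show "graph_aut (even_cube n) E f"
    by (rule graph_aut_if_inj_graph_hom[OF finite_even_cube hom inj_on_even_cube])
qed

end
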